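(* Let $\bm{L}\in\mathbb{R}^{m\times n}$ have rank $r$ and compact SVD $\bm{L}=\bm{W}_{\bm{L}}\bm{\Sigma}_{\bm{L}}\bm{V}_{\bm{L}}^T$, and suppose $\max_{i}\|\bm{W}_{\bm{L}}^T\bm{e}_i\|_2\leq\sqrt{\mu_1(\bm{L}) r/m}$ and $\max_{i}\|\bm{V}_{\bm{L}}^T\bm{e}_i\|_2\leq\sqrt{\mu_2(\bm{L}) r/n}$. Let $J\subseteq[n]$ and $\bm{C}=\bm{L}(:,J)$. Then \begin{enumerate} \item $\|\bm{C}\|_2\leq\sqrt{\frac{\mu_2(\bm{L})r|J|}{n}}\,\|\bm{L}\|_2$; \item $\kappa(\bm{C})\leq\sqrt{\mu_2(\bm{L}) r}\,\kappa(\bm{L})\sqrt{\frac{|J|}{n}}\,\|\bm{V}_{\bm{L}}(J,:)^\dagger\|_2$. \end{enumerate}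
   Context: $[n]=\{1,\dots,n\}$; $\bm{A}(I,J)$ denotes a submatrix (":" meaning all indices); $\bm{A}^\dagger$ is the Moore–Penrose pseudoinverse; $\kappa(\bm{A})=\|\bm{A}\|_2\|\bm{A}^\dagger\|_2=\sigma_{\max}(\bm{A})/\sigma_{\min}(\bm{A})$ with $\sigma_{\min}$ the smallest nonzero singular value. *)

theory Defs
  imports "Jordan_Normal_Form.Matrix" "Jordan_Normal_Form.DL_Submatrix"
begin

definition vnorm :: "real vec \<Rightarrow> real" where
  "vnorm v = sqrt (\<Sum>i<dim_vec v. (v $ i)^2)"

definition spec_norm :: "real mat \<Rightarrow> real" where
  "spec_norm A = Sup {vnorm (A *\<^sub>v x) | x. x \<in> carrier_vec (dim_col A) \<and> vnorm x \<le> 1}"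

definition is_pinv :: "real mat \<Rightarrow> real mat \<Rightarrow> bool" where
  "is_pinv A X \<longleftrightarrow> X \<in> carrier_mat (dim_col A) (dim_row A) \<and>
     A * X * A = A \<and> X * A * X = X \<and>
     transpose_mat (A * X) = A * X \<and> transpose_mat (X * A) = X * A"

definition pinv :: "real mat \<Rightarrow> real mat" where
  "pinv A = (THE X. is_pinv A X)"

definition cond_num :: "real mat \<Rightarrow> real" where
  "cond_num A = spec_norm A * spec_norm (pinv A)"

definition compact_svd :: "real mat \<Rightarrow> nat \<Rightarrow> real mat \<Rightarrow> real mat \<Rightarrow> real mat \<Rightarrow> bool" where
  "compact_svd L r W S V \<longleftrightarrow>
     W \<in> carrier_mat (dim_row L) r \<and> S \<in> carrier_mat r r \<and> V \<in> carrier_mat (dim_col L) r \<and>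
     transpose_mat W * W = 1\<^sub>m r \<and> transpose_mat V * V = 1\<^sub>m r \<and>
     diagonal_mat S \<and> (\<forall>i<r. S $$ (i,i) > 0) \<and>
     (\<forall>i j. i \<le> j \<and> j < r \<longrightarrow> S $$ (j,j) \<le> S $$ (i,i)) \<and>
     L = W * S * transpose_mat V"

end

theory Submission
  imports Defs "HOL-Analysis.L2_Norm" "Jordan_Normal_Form.Determinant"
begin

text \<open>
  Write V_J for the rows of V indexed by J. Then C = W S V_J^T, and since W is an
  isometry and |S u| <= |L| |u|, the spectral norm of C is at most |L| times the
  Frobenius norm of V_J, which the coherence bound on the |J| rows of V_J controls.
  For the condition number, every vector pinv C y lies in the range of C^T, which is
  contained in the range of V_J; there V_J^T is inverted by (pinv V_J)^T, and
  sigma_r |V_J^T z| <= |C z| together with |C (pinv C y)| <= |y| gives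
  |pinv C| <= |pinv V_J| / sigma_r, while 1 / sigma_r <= |pinv L|. That the
  pseudoinverse exists at all follows from a full-rank factorization A = F G, for
  which G^T (G G^T)^-1 (F^T F)^-1 F^T satisfies the Penrose conditions.
\<close>

section \<open>Euclidean, Frobenius and spectral norms\<close>

lemma vnorm_nonneg: "vnorm v \<ge> 0"
  unfolding vnorm_def by (simp add: sum_nonneg)

lemma vnorm_square: "vnorm v ^ 2 = v \<bullet> v"
  unfolding vnorm_def scalar_prod_def
  by (simp add: sum_nonneg power2_eq_square atLeast0LessThan)

lemma vnorm_eq_sqrt_scalar_prod: "vnorm v = sqrt (v \<bullet> v)"
  by (metis vnorm_square vnorm_nonneg real_sqrt_abs abs_of_nonneg)

lemma vnorm_eq_0_iff: "vnorm v = 0 \<longleftrightarrow> v = 0\<^sub>v (dim_vec v)"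
proof
  assume "vnorm v = 0"
  then have "(\<Sum>i<dim_vec v. (v $ i)^2) = 0"
    unfolding vnorm_def by simp
  then have "\<forall>i\<in>{..<dim_vec v}. (v $ i)^2 = 0"
    by (subst (asm) sum_nonneg_eq_0_iff) auto
  then show "v = 0\<^sub>v (dim_vec v)" by (intro eq_vecI) auto
next
  assume "v = 0\<^sub>v (dim_vec v)"
  then have "\<forall>i<dim_vec v. v $ i = 0" by (metis index_zero_vec(1))
  then show "vnorm v = 0" unfolding vnorm_def by simp
qed

lemma vnorm_smult: "vnorm (a \<cdot>\<^sub>v v) = \<bar>a\<bar> * vnorm v"
  unfolding vnorm_def
  by (simp add: power_mult_distrib sum_distrib_left[symmetric] real_sqrt_mult)

lemma abs_scalar_prod_le_vnorm:
  assumes "dim_vec x = dim_vec y"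
  shows "\<bar>x \<bullet> y\<bar> \<le> vnorm x * vnorm y"
proof -
  have "\<bar>x \<bullet> y\<bar> \<le> (\<Sum>i<dim_vec x. \<bar>x $ i\<bar> * \<bar>y $ i\<bar>)"
    unfolding scalar_prod_def using assms
    by (simp add: atLeast0LessThan abs_mult[symmetric] sum_abs)
  also have "\<dots> \<le> vnorm x * vnorm y"
    using L2_set_mult_ineq[of "\<lambda>i. x $ i" "\<lambda>i. y $ i" "{..<dim_vec x}"] assms
    unfolding vnorm_def L2_set_def by simp
  finally show ?thesis .
qed

lemma mult_self_le_imp_le:
  assumes "a * a \<le> a * b" "b \<ge> 0"
  shows "a \<le> (b::real)"
  using assms by (cases "a > 0") (auto simp: mult_le_cancel_left)

definition frob_norm :: "real mat \<Rightarrow> real" where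
  "frob_norm A = sqrt (\<Sum>i<dim_row A. vnorm (row A i) ^ 2)"

lemma frob_norm_nonneg: "frob_norm A \<ge> 0"
  unfolding frob_norm_def by (simp add: sum_nonneg)

lemma frob_norm_entries: "frob_norm A = sqrt (\<Sum>i<dim_row A. \<Sum>j<dim_col A. (A $$ (i,j))^2)"
  unfolding frob_norm_def vnorm_def by (simp add: sum_nonneg)

lemma frob_norm_transpose: "frob_norm (transpose_mat A) = frob_norm A"
  unfolding frob_norm_entries by (simp add: sum.swap[of _ "{..<dim_col A}"])

lemma vnorm_mult_mat_vec_le_frob_norm:
  assumes x: "x \<in> carrier_vec (dim_col A)"
  shows "vnorm (A *\<^sub>v x) \<le> frob_norm A * vnorm x"
proof -
  have "vnorm (A *\<^sub>v x) ^ 2 = (\<Sum>i<dim_row A. (row A i \<bullet> x)^2)"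
    unfolding vnorm_def by (simp add: sum_nonneg)
  also have "\<dots> \<le> (\<Sum>i<dim_row A. vnorm (row A i) ^ 2 * vnorm x ^ 2)"
  proof (rule sum_mono)
    fix i
    have "\<bar>row A i \<bullet> x\<bar> \<le> vnorm (row A i) * vnorm x"
      using x by (intro abs_scalar_prod_le_vnorm) auto
    then have "\<bar>row A i \<bullet> x\<bar>^2 \<le> (vnorm (row A i) * vnorm x)^2"
      by (rule power_mono) simp
    then show "(row A i \<bullet> x)^2 \<le> vnorm (row A i) ^ 2 * vnorm x ^ 2"
      by (simp add: power_mult_distrib)
  qed
  also have "\<dots> = frob_norm A ^ 2 * vnorm x ^ 2"
    unfolding frob_norm_def by (simp add: sum_distrib_right[symmetric] sum_nonneg)
  also have "\<dots> = (frob_norm A * vnorm x) ^ 2"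
    by (simp add: power_mult_distrib)
  finally show ?thesis
    by (rule power2_le_imp_le) (simp add: frob_norm_nonneg vnorm_nonneg)
qed

lemma spec_norm_set_bdd_above:
  "bdd_above {vnorm (A *\<^sub>v x) | x. x \<in> carrier_vec (dim_col A) \<and> vnorm x \<le> 1}"
proof (rule bdd_aboveI, safe)
  fix x :: "real vec" assume "x \<in> carrier_vec (dim_col A)" "vnorm x \<le> 1"
  then show "vnorm (A *\<^sub>v x) \<le> frob_norm A"
    using vnorm_mult_mat_vec_le_frob_norm[of x A] mult_left_le[OF _ frob_norm_nonneg]
    by (meson order_trans)
qed

lemma spec_norm_upper:
  assumes "x \<in> carrier_vec (dim_col A)" "vnorm x \<le> 1"
  shows "vnorm (A *\<^sub>v x) \<le> spec_norm A"
  unfolding spec_norm_def using assms by (intro cSup_upper spec_norm_set_bdd_above) auto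

lemma spec_norm_nonneg: "spec_norm A \<ge> 0"
  using spec_norm_upper[of "0\<^sub>v (dim_col A)" A] by (simp add: vnorm_def)

lemma vnorm_mult_le_spec_norm:
  assumes x: "x \<in> carrier_vec (dim_col A)"
  shows "vnorm (A *\<^sub>v x) \<le> spec_norm A * vnorm x"
proof (cases "vnorm x = 0")
  case True
  then have "A *\<^sub>v x = 0\<^sub>v (dim_row A)"
    using x by (intro eq_vecI) (auto simp: vnorm_eq_0_iff scalar_prod_def)
  then show ?thesis using True by (simp add: vnorm_def)
next
  case False
  then have pos: "vnorm x > 0" using vnorm_nonneg[of x] by linarith
  have "A *\<^sub>v ((1 / vnorm x) \<cdot>\<^sub>v x) = (1 / vnorm x) \<cdot>\<^sub>v (A *\<^sub>v x)"
    using x by (intro mult_mat_vec) auto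
  moreover have "vnorm (A *\<^sub>v ((1 / vnorm x) \<cdot>\<^sub>v x)) \<le> spec_norm A"
    using x pos by (intro spec_norm_upper) (auto simp: vnorm_smult)
  ultimately show ?thesis using pos by (simp add: vnorm_smult field_simps)
qed

lemma spec_norm_least:
  assumes "c \<ge> 0" and "\<And>x. x \<in> carrier_vec (dim_col A) \<Longrightarrow> vnorm (A *\<^sub>v x) \<le> c * vnorm x"
  shows "spec_norm A \<le> c"
  unfolding spec_norm_def
proof (rule cSup_least)
  show "{vnorm (A *\<^sub>v x) | x. x \<in> carrier_vec (dim_col A) \<and> vnorm x \<le> 1} \<noteq> {}"
    by (auto intro!: exI[of _ "0\<^sub>v (dim_col A)"] simp: vnorm_def)
next
  fix y assume "y \<in> {vnorm (A *\<^sub>v x) | x. x \<in> carrier_vec (dim_col A) \<and> vnorm x \<le> 1}"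
  then obtain x where "x \<in> carrier_vec (dim_col A)" "vnorm x \<le> 1" "y = vnorm (A *\<^sub>v x)"
    by blast
  then show "y \<le> c"
    using assms mult_left_le[of "vnorm x" c] by (meson order_trans)
qed

lemma vnorm_transpose_mult_le_spec_norm:
  assumes w: "w \<in> carrier_vec (dim_row A)"
  shows "vnorm (transpose_mat A *\<^sub>v w) \<le> spec_norm A * vnorm w"
proof -
  let ?v = "transpose_mat A *\<^sub>v w"
  have v: "?v \<in> carrier_vec (dim_col A)" by (simp add: carrier_vecI)
  have "vnorm ?v * vnorm ?v = ?v \<bullet> ?v"
    by (simp add: vnorm_square[symmetric] power2_eq_square)
  also have "\<dots> = w \<bullet> (A *\<^sub>v ?v)"
    using w v by (intro transpose_vec_mult_scalar) auto
  also have "\<dots> \<le> vnorm w * vnorm (A *\<^sub>v ?v)"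
    using abs_scalar_prod_le_vnorm[of w "A *\<^sub>v ?v"] w by simp
  also have "\<dots> \<le> vnorm w * (spec_norm A * vnorm ?v)"
    using vnorm_mult_le_spec_norm[OF v] vnorm_nonneg[of w] by (rule mult_left_mono)
  finally have "vnorm ?v * vnorm ?v \<le> vnorm ?v * (spec_norm A * vnorm w)"
    by (simp add: mult_ac)
  then show ?thesis
    by (rule mult_self_le_imp_le) (simp add: spec_norm_nonneg vnorm_nonneg)
qed

section \<open>The Moore--Penrose inverse\<close>

lemma assoc_mult_mat_dim:
  fixes A B C :: "'a::comm_semiring_0 mat"
  assumes "dim_col A = dim_row B" "dim_col B = dim_row C"
  shows "A * B * C = A * (B * C)"
  using assms by (intro assoc_mult_mat) auto

lemma assoc_mult_mat_vec_dim:
  fixes A B :: "'a::comm_semiring_0 mat"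
  assumes "dim_col A = dim_row B" "dim_col B = dim_vec v"
  shows "(A * B) *\<^sub>v v = A *\<^sub>v (B *\<^sub>v v)"
  using assms by (intro assoc_mult_mat_vec) (auto intro: carrier_vecI)

lemma transpose_mult_dim:
  fixes A B :: "'a::comm_semiring_0 mat"
  assumes "dim_col A = dim_row B"
  shows "transpose_mat (A * B) = transpose_mat B * transpose_mat A"
  using assms by (intro transpose_mult) auto

definition full_col_rank :: "real mat \<Rightarrow> bool" where
  "full_col_rank F \<longleftrightarrow>
     (\<forall>x\<in>carrier_vec (dim_col F). F *\<^sub>v x = 0\<^sub>v (dim_row F) \<longrightarrow> x = 0\<^sub>v (dim_col F))"

lemma gram_inverse_exists:
  assumes F: "F \<in> carrier_mat m k" and rk: "full_col_rank F"
  obtains Q where "Q \<in> carrier_mat k k" "transpose_mat F * F * Q = 1\<^sub>m k"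
    "Q * (transpose_mat F * F) = 1\<^sub>m k" "transpose_mat Q = Q"
proof -
  let ?G = "transpose_mat F * F"
  have Gc: "?G \<in> carrier_mat k k" using F by simp
  have "x = 0\<^sub>v k" if x: "x \<in> carrier_vec k" and Gx: "?G *\<^sub>v x = 0\<^sub>v k" for x
  proof -
    have "vnorm (F *\<^sub>v x) ^ 2 = (F *\<^sub>v x) \<bullet> (F *\<^sub>v x)"
      by (rule vnorm_square)
    also have "\<dots> = (transpose_mat F *\<^sub>v (F *\<^sub>v x)) \<bullet> x"
      using transpose_vec_mult_scalar[OF F x, of "F *\<^sub>v x"] F x by simp
    also have "transpose_mat F *\<^sub>v (F *\<^sub>v x) = 0\<^sub>v k"
      using Gx F x by simp
    finally have "F *\<^sub>v x = 0\<^sub>v m"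
      using F x by (simp add: vnorm_eq_0_iff)
    then show ?thesis using rk F x unfolding full_col_rank_def by auto
  qed
  then have "det ?G \<noteq> 0" using det_0_iff_vec_prod_zero_field[OF Gc] by auto
  then have "?G \<in> Units (ring_mat TYPE(real) k ())" by (rule det_non_zero_imp_unit[OF Gc])
  then obtain Q where Q: "Q \<in> carrier_mat k k" "?G * Q = 1\<^sub>m k" "Q * ?G = 1\<^sub>m k"
    unfolding Units_def ring_mat_def by auto
  have "transpose_mat Q * ?G = transpose_mat (?G * Q)"
    using F Q(1) by (simp add: transpose_mult_dim)
  also have "\<dots> = 1\<^sub>m k"
    using Q by simp
  finally have QG: "transpose_mat Q * ?G = 1\<^sub>m k" .
  have "transpose_mat Q = (transpose_mat Q * ?G) * Q"
    using F Q by (simp add: assoc_mult_mat_dim)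
  then have "transpose_mat Q = Q"
    using QG Q by simp
  then show ?thesis using that Q by blast
qed

lemma is_pinv_full_rank_factorization:
  assumes F: "F \<in> carrier_mat m k" and G: "G \<in> carrier_mat k n"
    and rkF: "full_col_rank F" and rkG: "full_col_rank (transpose_mat G)"
    and A: "A = F * G"
  shows "\<exists>X. is_pinv A X"
proof -
  obtain Q where Q: "Q \<in> carrier_mat k k" "transpose_mat F * F * Q = 1\<^sub>m k"
    "Q * (transpose_mat F * F) = 1\<^sub>m k" "transpose_mat Q = Q"
    using gram_inverse_exists[OF F rkF] .
  obtain P where P: "P \<in> carrier_mat k k" "G * transpose_mat G * P = 1\<^sub>m k"
    "P * (G * transpose_mat G) = 1\<^sub>m k" "transpose_mat P = P"
    using gram_inverse_exists[of "transpose_mat G" n k] G rkG by auto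
  define X where "X = transpose_mat G * (P * (Q * transpose_mat F))"
  note dims = F G P(1) Q(1)
  have AX: "A * X = F * (Q * transpose_mat F)"
  proof -
    have "A * X = F * ((G * transpose_mat G * P) * (Q * transpose_mat F))"
      unfolding A X_def using dims by (simp add: assoc_mult_mat_dim)
    then show ?thesis using dims P by simp
  qed
  have XA: "X * A = transpose_mat G * (P * G)"
  proof -
    have "X * A = transpose_mat G * (P * ((Q * (transpose_mat F * F)) * G))"
      unfolding A X_def using dims by (simp add: assoc_mult_mat_dim)
    then show ?thesis using dims Q by simp
  qed
  have "A * X * A = F * ((Q * (transpose_mat F * F)) * G)"
    unfolding AX unfolding A using dims by (simp add: assoc_mult_mat_dim)
  then have "A * X * A = A"
    using dims Q A by simp
  moreover have "X * A * X = transpose_mat G * ((P * (G * transpose_mat G)) * (P * (Q * transpose_mat F)))"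
    unfolding XA unfolding X_def using dims by (simp add: assoc_mult_mat_dim)
  then have "X * A * X = X"
    using dims P unfolding X_def by simp
  moreover have "transpose_mat (A * X) = A * X"
    unfolding AX using F Q by (simp add: transpose_mult_dim assoc_mult_mat_dim)
  moreover have "transpose_mat (X * A) = X * A"
    unfolding XA using G P by (simp add: transpose_mult_dim assoc_mult_mat_dim)
  moreover have "X \<in> carrier_mat n m"
    unfolding X_def using dims by simp
  ultimately have "is_pinv A X"
    unfolding is_pinv_def using A dims by auto
  then show ?thesis by blast
qed

lemma is_pinv_carrier:
  assumes "A \<in> carrier_mat m n" "is_pinv A X"
  shows "X \<in> carrier_mat n m"
  using assms unfolding is_pinv_def by auto

lemma is_pinv_transpose_left:
  assumes A: "A \<in> carrier_mat m n" and X: "is_pinv A X"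
  shows "transpose_mat A * (A * X) = transpose_mat A"
proof -
  have Xc: "X \<in> carrier_mat n m" using is_pinv_carrier A X by blast
  note X_eqs = X[unfolded is_pinv_def]
  have "transpose_mat A = transpose_mat (A * X * A)"
    using X_eqs by simp
  also have "\<dots> = transpose_mat A * transpose_mat (A * X)"
    using A Xc by (simp add: transpose_mult_dim)
  finally show ?thesis
    using X_eqs by simp
qed

lemma is_pinv_transpose_right:
  assumes A: "A \<in> carrier_mat m n" and X: "is_pinv A X"
  shows "X * A * transpose_mat A = transpose_mat A"
proof -
  have Xc: "X \<in> carrier_mat n m" using is_pinv_carrier A X by blast
  note X_eqs = X[unfolded is_pinv_def]
  have "transpose_mat A = transpose_mat (A * (X * A))"
    using X_eqs A Xc by (simp add: assoc_mult_mat_dim)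
  also have "\<dots> = transpose_mat (X * A) * transpose_mat A"
    using A Xc by (simp add: transpose_mult_dim)
  finally show ?thesis
    using X_eqs by simp
qed

lemma is_pinv_unique:
  assumes A: "A \<in> carrier_mat m n" and X: "is_pinv A X" and Y: "is_pinv A Y"
  shows "X = Y"
proof -
  have Xc: "X \<in> carrier_mat n m" and Yc: "Y \<in> carrier_mat n m"
    using is_pinv_carrier A X Y by auto
  note dims = A Xc Yc
  note X_eqs = X[unfolded is_pinv_def] and Y_eqs = Y[unfolded is_pinv_def]
  have AX: "transpose_mat X * transpose_mat A = A * X"
    using X_eqs dims by (metis transpose_mult)
  have YA: "transpose_mat A * transpose_mat Y = Y * A"
    using Y_eqs dims by (metis transpose_mult)
  have AXAY: "A * X * (A * Y) = A * Y"
  proof -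
    have "A * X * (A * Y) = A * X * A * Y"
      using dims by (simp add: assoc_mult_mat_dim)
    then show ?thesis using X_eqs by simp
  qed
  have "X = X * (A * X)"
    using X_eqs dims by (simp add: assoc_mult_mat_dim)
  also have "\<dots> = X * (transpose_mat X * transpose_mat A)"
    using AX by simp
  also have "\<dots> = X * ((transpose_mat X * transpose_mat A) * (A * Y))"
    using is_pinv_transpose_left[OF A Y] dims by (simp add: assoc_mult_mat_dim)
  also have "\<dots> = X * (A * Y)"
    using AX AXAY by simp
  finally have X_eq: "X = X * A * Y"
    using dims by (simp add: assoc_mult_mat_dim)
  have "Y = Y * A * Y"
    using Y_eqs by simp
  also have "\<dots> = X * A * transpose_mat A * transpose_mat Y * Y"
    using YA is_pinv_transpose_right[OF A X] by simp
  also have "\<dots> = X * A * (transpose_mat A * transpose_mat Y) * Y"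
    using dims by (simp add: assoc_mult_mat_dim)
  also have "\<dots> = X * A * (Y * A * Y)"
    using YA dims by (simp add: assoc_mult_mat_dim)
  also have "\<dots> = X * A * Y"
    using Y_eqs by simp
  finally show ?thesis using X_eq by simp
qed

definition append_col :: "'a mat \<Rightarrow> 'a vec \<Rightarrow> 'a mat" where
  "append_col F a =
     mat (dim_row F) (Suc (dim_col F)) (\<lambda>(i, j). if j < dim_col F then F $$ (i, j) else a $ i)"

lemma append_col_carrier: "F \<in> carrier_mat m k \<Longrightarrow> append_col F a \<in> carrier_mat m (Suc k)"
  unfolding append_col_def by auto

lemma mult_append_col_vec:
  fixes F :: "'a::comm_semiring_1 mat"
  assumes F: "F \<in> carrier_mat m k" and a: "a \<in> carrier_vec m" and x: "x \<in> carrier_vec (Suc k)"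
  shows "append_col F a *\<^sub>v x = F *\<^sub>v vec_first x k + x $ k \<cdot>\<^sub>v a"
proof (rule eq_vecI)
  fix i assume "i < dim_vec (F *\<^sub>v vec_first x k + x $ k \<cdot>\<^sub>v a)"
  then have i: "i < m" using a by simp
  have "(append_col F a *\<^sub>v x) $ i = (\<Sum>l<Suc k. append_col F a $$ (i, l) * x $ l)"
    using F x i by (simp add: append_col_def scalar_prod_def atLeast0LessThan)
  also have "\<dots> = (\<Sum>l<k. F $$ (i, l) * x $ l) + a $ i * x $ k"
    using F i by (simp add: append_col_def)
  finally show "(append_col F a *\<^sub>v x) $ i = (F *\<^sub>v vec_first x k + x $ k \<cdot>\<^sub>v a) $ i"
    using F a i by (simp add: scalar_prod_def vec_first_def atLeast0LessThan mult.commute)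
qed (use F a in \<open>simp add: append_col_def\<close>)

lemma vec_eq_zero_by_first_and_last:
  assumes "x \<in> carrier_vec (Suc k)" "vec_first x k = 0\<^sub>v k" "x $ k = 0"
  shows "x = 0\<^sub>v (Suc k)"
proof (rule eq_vecI)
  fix l assume "l < dim_vec (0\<^sub>v (Suc k) :: 'a vec)"
  then show "x $ l = 0\<^sub>v (Suc k) $ l"
    using assms by (cases "l < k") (auto simp: vec_first_def vec_eq_iff less_Suc_eq)
qed (use assms in simp)

lemma append_col_mult_padded:
  fixes F :: "'a::comm_semiring_1 mat"
  assumes F: "F \<in> carrier_mat m k" and a: "a \<in> carrier_vec m" and c: "c \<in> carrier_vec k"
  shows "append_col F a *\<^sub>v (c @\<^sub>v 0\<^sub>v 1) = F *\<^sub>v c"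
proof -
  have "vec_first (c @\<^sub>v 0\<^sub>v 1) k = c"
    using c by (intro eq_vecI) (auto simp: vec_first_def)
  moreover have "c @\<^sub>v 0\<^sub>v 1 \<in> carrier_vec (Suc k)"
    using append_carrier_vec[OF c zero_carrier_vec[of 1]] by simp
  ultimately have "append_col F a *\<^sub>v (c @\<^sub>v 0\<^sub>v 1) = F *\<^sub>v c + 0 \<cdot>\<^sub>v a"
    using mult_append_col_vec[OF F a] c by simp
  also have "\<dots> = F *\<^sub>v c"
    using c F a by (auto simp: vec_eq_iff)
  finally show ?thesis .
qed

lemma append_col_mult_unit_vec:
  fixes F :: "'a::comm_semiring_1 mat"
  assumes F: "F \<in> carrier_mat m k" and a: "a \<in> carrier_vec m"
  shows "append_col F a *\<^sub>v unit_vec (Suc k) k = a"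
proof -
  have first: "vec_first (unit_vec (Suc k) k) k = (0\<^sub>v k :: 'a vec)"
    by (intro eq_vecI) (auto simp: vec_first_def)
  have "append_col F a *\<^sub>v unit_vec (Suc k) k = F *\<^sub>v vec_first (unit_vec (Suc k) k) k + a"
    using mult_append_col_vec[OF F a, of "unit_vec (Suc k) k"] by simp
  also have "\<dots> = a"
    unfolding first using F a by (auto simp: vec_eq_iff)
  finally show ?thesis .
qed

lemma scalar_prod_padded:
  fixes c :: "'a::comm_semiring_1 vec"
  assumes c: "c \<in> carrier_vec k" and x: "x \<in> carrier_vec (Suc k)"
  shows "(c @\<^sub>v 0\<^sub>v 1) \<bullet> x = c \<bullet> vec_first x k"
proof -
  have "(c @\<^sub>v 0\<^sub>v 1) \<bullet> (vec_first x k @\<^sub>v vec_last x 1)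
      = c \<bullet> vec_first x k + 0\<^sub>v 1 \<bullet> vec_last x 1"
    by (rule scalar_prod_append[OF c zero_carrier_vec vec_first_carrier vec_last_carrier])
  moreover have "vec_first x k @\<^sub>v vec_last x 1 = x"
    using x by (intro vec_first_last_append) simp
  ultimately show ?thesis by simp
qed

lemma full_col_rank_append_col:
  assumes F: "F \<in> carrier_mat m k" and rkF: "full_col_rank F" and a: "a \<in> carrier_vec m"
    and a_new: "\<forall>c\<in>carrier_vec k. F *\<^sub>v c \<noteq> a"
  shows "full_col_rank (append_col F a)"
  unfolding full_col_rank_def
proof (intro ballI impI)
  fix x assume x: "x \<in> carrier_vec (dim_col (append_col F a))"
    and x0: "append_col F a *\<^sub>v x = 0\<^sub>v (dim_row (append_col F a))"
  have A: "append_col F a \<in> carrier_mat m (Suc k)"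
    using F by (rule append_col_carrier)
  then have x: "x \<in> carrier_vec (Suc k)"
    using x by simp
  then have sum0: "F *\<^sub>v vec_first x k + x $ k \<cdot>\<^sub>v a = 0\<^sub>v m"
    using mult_append_col_vec[OF F a x] x0 A by simp
  have xk: "x $ k = 0"
  proof (rule ccontr)
    assume "x $ k \<noteq> 0"
    then have "F *\<^sub>v ((- 1 / x $ k) \<cdot>\<^sub>v vec_first x k) = a"
      using sum0 F a by (auto simp: mult_mat_vec vec_eq_iff field_simps)
    then show False using a_new by auto
  qed
  then have "F *\<^sub>v vec_first x k = 0\<^sub>v m"
    using sum0 F a by (auto simp: vec_eq_iff)
  then have "vec_first x k = 0\<^sub>v k"
    using rkF F unfolding full_col_rank_def by auto
  then show "x = 0\<^sub>v (dim_col (append_col F a))"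
    using vec_eq_zero_by_first_and_last x xk A by auto
qed

text \<open>
  The vectors cs are coordinates of the given columns with respect to the columns of F;
  the last conjunct says that they span, i.e. their matrix has full row rank.
\<close>

lemma full_rank_factorization_of_cols:
  fixes as :: "real vec list"
  assumes "set as \<subseteq> carrier_vec m"
  shows "\<exists>k F cs. F \<in> carrier_mat m k \<and> full_col_rank F \<and> set cs \<subseteq> carrier_vec k \<and>
    map (\<lambda>c. F *\<^sub>v c) cs = as \<and> (\<forall>x\<in>carrier_vec k. (\<forall>c\<in>set cs. c \<bullet> x = 0) \<longrightarrow> x = 0\<^sub>v k)"
  using assms
proof (induction as)
  case Nil
  have "full_col_rank (0\<^sub>m m 0)"
    unfolding full_col_rank_def by (auto intro: eq_vecI)
  then show ?case
    by (intro exI[of _ 0] exI[of _ "0\<^sub>m m 0"] exI[of _ "[]"]) (auto intro: eq_vecI)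
next
  case (Cons a as)
  then obtain k F cs where F: "F \<in> carrier_mat m k" and rkF: "full_col_rank F"
    and cs_set: "set cs \<subseteq> carrier_vec k" and cs_map: "map (\<lambda>c. F *\<^sub>v c) cs = as"
    and span: "\<forall>x\<in>carrier_vec k. (\<forall>c\<in>set cs. c \<bullet> x = 0) \<longrightarrow> x = 0\<^sub>v k"
    by auto
  have cs: "c \<in> carrier_vec k" if "c \<in> set cs" for c
    using cs_set that by auto
  have a: "a \<in> carrier_vec m" using Cons.prems by simp
  show ?case
  proof (cases "\<exists>c\<in>carrier_vec k. F *\<^sub>v c = a")
    case True
    then obtain c where "c \<in> carrier_vec k" "F *\<^sub>v c = a" by blast
    then show ?thesis using F rkF cs_set cs_map span
      by (intro exI[of _ k] exI[of _ F] exI[of _ "c # cs"]) auto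
  next
    case False
    define cs' where "cs' = unit_vec (Suc k) k # map (\<lambda>c. c @\<^sub>v 0\<^sub>v 1) cs"
    have "set cs' \<subseteq> carrier_vec (Suc k)"
      unfolding cs'_def using cs append_carrier_vec[OF _ zero_carrier_vec[of 1]] by auto
    moreover have "map (\<lambda>c. append_col F a *\<^sub>v c) cs' = a # as"
      unfolding cs'_def using cs cs_map append_col_mult_padded[OF F a] append_col_mult_unit_vec[OF F a]
      by (auto simp del: One_nat_def)
    moreover have "x = 0\<^sub>v (Suc k)"
      if x: "x \<in> carrier_vec (Suc k)" and orth: "\<forall>c\<in>set cs'. c \<bullet> x = 0" for x
    proof -
      have "x $ k = 0"
        using orth x unfolding cs'_def by simp
      moreover have "c \<bullet> vec_first x k = 0" if "c \<in> set cs" for c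
        using orth that scalar_prod_padded[OF cs[OF that] x] unfolding cs'_def
        by (simp del: One_nat_def)
      then have "vec_first x k = 0\<^sub>v k"
        using span by simp
      ultimately show ?thesis using vec_eq_zero_by_first_and_last x by blast
    qed
    ultimately show ?thesis
      using append_col_carrier[OF F] full_col_rank_append_col[OF F rkF a] False
      by (intro exI[of _ "Suc k"] exI[of _ "append_col F a"] exI[of _ cs']) auto
  qed
qed

lemma full_rank_factorization:
  fixes A :: "real mat"
  assumes A: "A \<in> carrier_mat m n"
  obtains k F G where "F \<in> carrier_mat m k" "G \<in> carrier_mat k n" "A = F * G"
    "full_col_rank F" "full_col_rank (transpose_mat G)"
proof -
  have "set (cols A) \<subseteq> carrier_vec m"
    using A by (auto simp: cols_def)
  then obtain k F cs where F: "F \<in> carrier_mat m k" and rkF: "full_col_rank F"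
    and cs: "set cs \<subseteq> carrier_vec k" and cols: "map (\<lambda>c. F *\<^sub>v c) cs = cols A"
    and span: "\<forall>x\<in>carrier_vec k. (\<forall>c\<in>set cs. c \<bullet> x = 0) \<longrightarrow> x = 0\<^sub>v k"
    using full_rank_factorization_of_cols by blast
  have len: "length cs = n"
    using arg_cong[OF cols, of length] A by simp
  have cs_nth: "cs ! j \<in> carrier_vec k" if "j < n" for j
    using cs len that by auto
  define G where "G = mat_of_cols k cs"
  have G: "G \<in> carrier_mat k n"
    unfolding G_def len[symmetric] by (rule mat_of_cols_carrier)
  have colG: "col G j = cs ! j" if "j < n" for j
    unfolding G_def using that len cs_nth by simp
  have "A = F * G"
  proof (rule mat_col_eqI)
    fix j assume "j < dim_col (F * G)"
    then have j: "j < n" using G by simp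
    have "col A j = cols A ! j" using A j by simp
    also have "\<dots> = F *\<^sub>v cs ! j" using cols j len by (metis nth_map)
    also have "\<dots> = col (F * G) j" by (simp only: col_mult2[OF F G j] colG[OF j])
    finally show "col A j = col (F * G) j" .
  qed (use A F G in auto)
  moreover have "full_col_rank (transpose_mat G)"
    unfolding full_col_rank_def
  proof (intro ballI impI)
    fix x assume x: "x \<in> carrier_vec (dim_col (transpose_mat G))"
      and "transpose_mat G *\<^sub>v x = 0\<^sub>v (dim_row (transpose_mat G))"
    then have "cs ! j \<bullet> x = 0" if "j < n" for j
      using that G colG by (metis index_mult_mat_vec index_transpose_mat(2) index_zero_vec(1) row_transpose carrier_matD)
    then have "\<forall>c\<in>set cs. c \<bullet> x = 0"
      using len by (metis in_set_conv_nth)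
    then show "x = 0\<^sub>v (dim_col (transpose_mat G))"
      using span x G by simp
  qed
  ultimately show ?thesis using that F G rkF by blast
qed

lemma pinv_is_pinv:
  assumes A: "A \<in> carrier_mat m n"
  shows "is_pinv A (pinv A)"
proof -
  obtain X where X: "is_pinv A X"
    using full_rank_factorization[OF A] is_pinv_full_rank_factorization by metis
  then have "(THE X. is_pinv A X) = X"
    using is_pinv_unique[OF A] by blast
  then show ?thesis unfolding pinv_def using X by simp
qed

lemma pinv_carrier: "A \<in> carrier_mat m n \<Longrightarrow> pinv A \<in> carrier_mat n m"
  using is_pinv_carrier pinv_is_pinv by blast

lemma vnorm_le_spec_norm_pinv:
  assumes A: "A \<in> carrier_mat m n" and u: "u \<in> carrier_vec m"
  shows "vnorm (transpose_mat A *\<^sub>v u) \<le> spec_norm (pinv A) * vnorm (A *\<^sub>v (transpose_mat A *\<^sub>v u))"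
proof -
  have X: "pinv A \<in> carrier_mat n m" using pinv_carrier[OF A] .
  have "pinv A *\<^sub>v (A *\<^sub>v (transpose_mat A *\<^sub>v u)) = (pinv A * A * transpose_mat A) *\<^sub>v u"
    using A X u by (simp add: assoc_mult_mat_vec_dim)
  also have "\<dots> = transpose_mat A *\<^sub>v u"
    using is_pinv_transpose_right[OF A pinv_is_pinv[OF A]] by simp
  moreover have "A *\<^sub>v (transpose_mat A *\<^sub>v u) \<in> carrier_vec (dim_col (pinv A))"
    using mult_mat_vec_carrier[OF A mult_mat_vec_carrier[OF transpose_carrier_mat[THEN iffD2, OF A] u]] X
    by simp
  ultimately show ?thesis
    using vnorm_mult_le_spec_norm by metis
qed

lemma vnorm_mult_pinv_le:
  assumes A: "A \<in> carrier_mat m n" and y: "y \<in> carrier_vec m"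
  shows "vnorm (A *\<^sub>v (pinv A *\<^sub>v y)) \<le> vnorm y"
proof -
  let ?P = "A * pinv A"
  have X: "pinv A \<in> carrier_mat n m" using pinv_carrier[OF A] .
  note X_eqs = pinv_is_pinv[OF A, unfolded is_pinv_def]
  have P: "?P \<in> carrier_mat m m" using A X by simp
  have Py: "A *\<^sub>v (pinv A *\<^sub>v y) = ?P *\<^sub>v y" using A X y by simp
  have "?P * ?P = A * pinv A * A * pinv A"
    using A X by (simp add: assoc_mult_mat_dim)
  also have "\<dots> = ?P"
    using X_eqs by simp
  finally have idem: "?P * ?P = ?P" .
  have "transpose_mat ?P *\<^sub>v (?P *\<^sub>v y) = ?P *\<^sub>v (?P *\<^sub>v y)"
    using X_eqs by simp
  also have "\<dots> = (?P * ?P) *\<^sub>v y"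
    using P y by simp
  finally have "transpose_mat ?P *\<^sub>v (?P *\<^sub>v y) = ?P *\<^sub>v y"
    unfolding idem .
  then have "vnorm (?P *\<^sub>v y) * vnorm (?P *\<^sub>v y) = (?P *\<^sub>v y) \<bullet> y"
    using transpose_vec_mult_scalar[OF P y, of "?P *\<^sub>v y"] P y
    by (simp add: vnorm_square[symmetric] power2_eq_square)
  also have "\<dots> \<le> \<bar>(?P *\<^sub>v y) \<bullet> y\<bar>"
    by (rule abs_ge_self)
  also have "\<dots> \<le> vnorm (?P *\<^sub>v y) * vnorm y"
    using A y by (intro abs_scalar_prod_le_vnorm) simp
  finally show ?thesis
    unfolding Py by (rule mult_self_le_imp_le) (rule vnorm_nonneg)
qed

lemma pinv_transpose_mult_range:
  assumes A: "A \<in> carrier_mat m n" and u: "u \<in> carrier_vec n"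
  shows "transpose_mat (pinv A) *\<^sub>v (transpose_mat A *\<^sub>v (A *\<^sub>v u)) = A *\<^sub>v u"
proof -
  have X: "pinv A \<in> carrier_mat n m" using pinv_carrier[OF A] .
  note X_eqs = pinv_is_pinv[OF A, unfolded is_pinv_def]
  have "transpose_mat (pinv A) * transpose_mat A = A * pinv A"
    using X_eqs A X by (metis transpose_mult)
  then have "(transpose_mat (pinv A) * transpose_mat A * A) *\<^sub>v u = A *\<^sub>v u"
    using X_eqs by simp
  then show ?thesis
    using A X u by (simp add: assoc_mult_mat_vec_dim)
qed

lemma pinv_mult_eq_transpose_mult:
  assumes A: "A \<in> carrier_mat m n" and y: "y \<in> carrier_vec m"
  shows "pinv A *\<^sub>v y = transpose_mat A *\<^sub>v (transpose_mat (pinv A) *\<^sub>v (pinv A *\<^sub>v y))"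
proof -
  have X: "pinv A \<in> carrier_mat n m" using pinv_carrier[OF A] .
  note X_eqs = pinv_is_pinv[OF A, unfolded is_pinv_def]
  have "transpose_mat A * transpose_mat (pinv A) = pinv A * A"
    using X_eqs A X by (metis transpose_mult)
  then have "pinv A = transpose_mat A * transpose_mat (pinv A) * pinv A"
    using X_eqs by simp
  then have "pinv A *\<^sub>v y = (transpose_mat A * transpose_mat (pinv A) * pinv A) *\<^sub>v y"
    by (rule arg_cong[where f = "\<lambda>M. M *\<^sub>v y"])
  also have "\<dots> = transpose_mat A *\<^sub>v (transpose_mat (pinv A) *\<^sub>v (pinv A *\<^sub>v y))"
    using A X y by (simp add: assoc_mult_mat_vec_dim)
  finally show ?thesis .
qed

lemma vnorm_le_spec_norm_pinv_range:
  assumes B: "B \<in> carrier_mat k r" and u: "u \<in> carrier_vec r"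
  shows "vnorm (B *\<^sub>v u) \<le> spec_norm (pinv B) * vnorm (transpose_mat B *\<^sub>v (B *\<^sub>v u))"
proof -
  have "vnorm (transpose_mat (pinv B) *\<^sub>v (transpose_mat B *\<^sub>v (B *\<^sub>v u)))
      \<le> spec_norm (pinv B) * vnorm (transpose_mat B *\<^sub>v (B *\<^sub>v u))"
    using pinv_carrier[OF B]
      mult_mat_vec_carrier[OF transpose_carrier_mat[THEN iffD2, OF B] mult_mat_vec_carrier[OF B u]]
    by (intro vnorm_transpose_mult_le_spec_norm) simp
  then show ?thesis
    unfolding pinv_transpose_mult_range[OF B u] .
qed

section \<open>Column submatrices of a compact SVD\<close>

lemma pick_atLeast0LessThan: "i < m \<Longrightarrow> pick {0..<m} i = i"
proof -
  assume i: "i < m"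
  have "{a. a < m \<and> a \<in> (UNIV :: nat set)} = {0..<m}" by auto
  moreover have "pick UNIV i = pick {a. a < m \<and> a \<in> (UNIV :: nat set)} i"
    by (rule pick_reduce_set) (use i in auto)
  ultimately show ?thesis by (simp add: pick_UNIV)
qed

lemma submatrix_carrier_subset:
  assumes "A \<in> carrier_mat m n" "I \<subseteq> {0..<m}" "J \<subseteq> {0..<n}"
  shows "submatrix A I J \<in> carrier_mat (card I) (card J)"
proof -
  have "{i. i < m \<and> i \<in> I} = I" "{j. j < n \<and> j \<in> J} = J" using assms by auto
  then show ?thesis using assms by (intro carrier_matI) (simp_all add: dim_submatrix)
qed

lemma submatrix_index_subset:
  assumes "A \<in> carrier_mat m n" "I \<subseteq> {0..<m}" "J \<subseteq> {0..<n}" "i < card I" "j < card J"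
  shows "submatrix A I J $$ (i, j) = A $$ (pick I i, pick J j)"
proof -
  have "{i. i < m \<and> i \<in> I} = I" "{j. j < n \<and> j \<in> J} = J" using assms by auto
  then show ?thesis using assms by (intro submatrix_index) auto
qed

lemma pick_less:
  assumes "J \<subseteq> {0..<n}" "a < card J"
  shows "pick J a < n"
  using pick_in_set assms by fastforce

lemma row_submatrix_rows:
  assumes V: "V \<in> carrier_mat n r" and J: "J \<subseteq> {0..<n}" and a: "a < card J"
  shows "row (submatrix V J {0..<r}) a = row V (pick J a)"
  using submatrix_carrier_subset[OF V J, of "{0..<r}"] submatrix_index_subset[OF V J, of "{0..<r}" a]
    pick_atLeast0LessThan pick_less[OF J a] V a
  by (intro eq_vecI) auto

lemma vnorm_isometry:
  assumes W: "W \<in> carrier_mat m r" and WW: "transpose_mat W * W = 1\<^sub>m r" and u: "u \<in> carrier_vec r"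
  shows "vnorm (W *\<^sub>v u) = vnorm u"
proof -
  have "transpose_mat W *\<^sub>v (W *\<^sub>v u) = (transpose_mat W * W) *\<^sub>v u"
    using W u by simp
  also have "\<dots> = u"
    using WW u by simp
  finally have "transpose_mat W *\<^sub>v (W *\<^sub>v u) = u" .
  then have "(W *\<^sub>v u) \<bullet> (W *\<^sub>v u) = u \<bullet> u"
    using transpose_vec_mult_scalar[OF W u mult_mat_vec_carrier[OF W u]] by simp
  then show ?thesis by (simp add: vnorm_eq_sqrt_scalar_prod)
qed

lemma index_diagonal_mat_mult_vec:
  assumes S: "S \<in> carrier_mat r r" "diagonal_mat S" and u: "u \<in> carrier_vec r" and i: "i < r"
  shows "(S *\<^sub>v u) $ i = S $$ (i, i) * u $ i"
proof -
  have "(S *\<^sub>v u) $ i = (\<Sum>j\<in>{0..<r}. S $$ (i, j) * u $ j)"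
    using S u i by (simp add: scalar_prod_def)
  also have "\<dots> = (\<Sum>j\<in>{0..<r}. if j = i then S $$ (i, i) * u $ i else 0)"
    by (rule sum.cong) (use S i in \<open>auto simp: diagonal_mat_def\<close>)
  finally show ?thesis using i by simp
qed

lemma diagonal_mat_mult_unit_vec:
  fixes S :: "real mat"
  assumes S: "S \<in> carrier_mat r r" "diagonal_mat S" and j: "j < r"
  shows "S *\<^sub>v unit_vec r j = S $$ (j, j) \<cdot>\<^sub>v unit_vec r j"
  using S j by (intro eq_vecI) (auto simp: diagonal_mat_def)

lemma vnorm_diag_mult_ge:
  assumes S: "S \<in> carrier_mat r r" "diagonal_mat S" and u: "u \<in> carrier_vec r"
    and s: "0 \<le> s" "\<forall>i<r. s \<le> S $$ (i, i)"
  shows "s * vnorm u \<le> vnorm (S *\<^sub>v u)"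
proof -
  have "(s * vnorm u) ^ 2 = (\<Sum>i<r. s ^ 2 * (u $ i) ^ 2)"
    unfolding vnorm_def using u by (simp add: power_mult_distrib sum_nonneg sum_distrib_left)
  also have "\<dots> \<le> (\<Sum>i<r. (S $$ (i, i) * u $ i) ^ 2)"
    using s by (intro sum_mono) (simp add: power_mult_distrib mult_right_mono power_mono)
  also have "\<dots> = vnorm (S *\<^sub>v u) ^ 2"
    unfolding vnorm_def using S u index_diagonal_mat_mult_vec[OF S u] by (simp add: sum_nonneg)
  finally show ?thesis
    by (rule power2_le_imp_le) (rule vnorm_nonneg)
qed

lemma svd_column_submatrix:
  assumes L: "L \<in> carrier_mat m n" and svd: "compact_svd L r W S V" and J: "J \<subseteq> {0..<n}"
  shows "submatrix L {0..<m} J = W * S * transpose_mat (submatrix V J {0..<r})"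
proof -
  have W: "W \<in> carrier_mat m r" and S: "S \<in> carrier_mat r r" and V: "V \<in> carrier_mat n r"
    and L_eq: "L = W * S * transpose_mat V"
    using svd L unfolding compact_svd_def by auto
  have VJ: "submatrix V J {0..<r} \<in> carrier_mat (card J) r"
    using submatrix_carrier_subset[OF V J, of "{0..<r}"] by simp
  show ?thesis
  proof (rule eq_matI)
    fix i a assume "i < dim_row (W * S * transpose_mat (submatrix V J {0..<r}))"
      "a < dim_col (W * S * transpose_mat (submatrix V J {0..<r}))"
    then have i: "i < m" and a: "a < card J" using W VJ by auto
    have "i < card {0..<m}" using i by simp
    then have "submatrix L {0..<m} J $$ (i, a) = L $$ (i, pick J a)"
      using submatrix_index_subset[OF L order.refl J _ a] pick_atLeast0LessThan[OF i] by simp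
    also have "\<dots> = row (W * S) i \<bullet> col (transpose_mat V) (pick J a)"
      unfolding L_eq using W S V i pick_less[OF J a] by (intro index_mult_mat(1)) auto
    also have "\<dots> = row (W * S) i \<bullet> col (transpose_mat (submatrix V J {0..<r})) a"
      using V VJ a pick_less[OF J a] row_submatrix_rows[OF V J a] by simp
    also have "\<dots> = (W * S * transpose_mat (submatrix V J {0..<r})) $$ (i, a)"
      using W S VJ i a by (intro index_mult_mat(1)[symmetric]) auto
    finally show "submatrix L {0..<m} J $$ (i, a) = (W * S * transpose_mat (submatrix V J {0..<r})) $$ (i, a)" .
  qed (use submatrix_carrier_subset[OF L _ J, of "{0..<m}"] W VJ in auto)
qed

lemma svd_mult_vec:
  assumes svd: "compact_svd L r W S V" and u: "u \<in> carrier_vec r"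
  shows "L *\<^sub>v (V *\<^sub>v u) = W *\<^sub>v (S *\<^sub>v u)"
    and "transpose_mat L *\<^sub>v (W *\<^sub>v u) = V *\<^sub>v (S *\<^sub>v u)"
proof -
  have W: "W \<in> carrier_mat (dim_row L) r" and S: "S \<in> carrier_mat r r"
    and V: "V \<in> carrier_mat (dim_col L) r" and WW: "transpose_mat W * W = 1\<^sub>m r"
    and VV: "transpose_mat V * V = 1\<^sub>m r" and diag: "diagonal_mat S"
    and L_eq: "L = W * S * transpose_mat V"
    using svd unfolding compact_svd_def by auto
  have "transpose_mat V *\<^sub>v (V *\<^sub>v u) = (transpose_mat V * V) *\<^sub>v u"
    using V u by simp
  then have "transpose_mat V *\<^sub>v (V *\<^sub>v u) = u"
    using VV u by simp
  then show "L *\<^sub>v (V *\<^sub>v u) = W *\<^sub>v (S *\<^sub>v u)"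
    unfolding L_eq using W S V u by (simp add: assoc_mult_mat_vec_dim)
  have "transpose_mat W *\<^sub>v (W *\<^sub>v u) = (transpose_mat W * W) *\<^sub>v u"
    using W u by simp
  then have "transpose_mat W *\<^sub>v (W *\<^sub>v u) = u"
    using WW u by simp
  moreover have "transpose_mat S = S"
  proof (rule eq_matI)
    fix i j assume "i < dim_row S" "j < dim_col S"
    then show "transpose_mat S $$ (i, j) = S $$ (i, j)"
      using S diag by (cases "i = j") (auto simp: diagonal_mat_def)
  qed (use S in auto)
  moreover have "transpose_mat L = V * (transpose_mat S * transpose_mat W)"
    unfolding L_eq using W S V by (simp add: transpose_mult_dim assoc_mult_mat_dim)
  ultimately show "transpose_mat L *\<^sub>v (W *\<^sub>v u) = V *\<^sub>v (S *\<^sub>v u)"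
    using W S V u by (simp add: assoc_mult_mat_vec_dim)
qed

lemma svd_sigma_mult_le:
  assumes svd: "compact_svd L r W S V" and u: "u \<in> carrier_vec r"
  shows "vnorm (S *\<^sub>v u) \<le> spec_norm L * vnorm u"
proof -
  have W: "W \<in> carrier_mat (dim_row L) r" and S: "S \<in> carrier_mat r r"
    and V: "V \<in> carrier_mat (dim_col L) r" and WW: "transpose_mat W * W = 1\<^sub>m r"
    and VV: "transpose_mat V * V = 1\<^sub>m r"
    using svd unfolding compact_svd_def by auto
  have "vnorm (S *\<^sub>v u) = vnorm (L *\<^sub>v (V *\<^sub>v u))"
    using svd_mult_vec(1)[OF svd u] vnorm_isometry[OF W WW, of "S *\<^sub>v u"] S u by simp
  also have "\<dots> \<le> spec_norm L * vnorm (V *\<^sub>v u)"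
    using V u by (intro vnorm_mult_le_spec_norm) simp
  also have "vnorm (V *\<^sub>v u) = vnorm u"
    by (rule vnorm_isometry[OF V VV u])
  finally show ?thesis .
qed

lemma spec_norm_column_submatrix_le:
  assumes L: "L \<in> carrier_mat m n" and svd: "compact_svd L r W S V" and J: "J \<subseteq> {0..<n}"
  shows "spec_norm (submatrix L {0..<m} J) \<le> frob_norm (submatrix V J {0..<r}) * spec_norm L"
proof (rule spec_norm_least)
  let ?B = "transpose_mat (submatrix V J {0..<r})"
  have W: "W \<in> carrier_mat m r" and WW: "transpose_mat W * W = 1\<^sub>m r"
    and S: "S \<in> carrier_mat r r" and V: "V \<in> carrier_mat n r"
    using svd L unfolding compact_svd_def by auto
  have B: "?B \<in> carrier_mat r (card J)"
    using submatrix_carrier_subset[OF V J, of "{0..<r}"] by simp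
  show "0 \<le> frob_norm (submatrix V J {0..<r}) * spec_norm L"
    by (simp add: frob_norm_nonneg spec_norm_nonneg)
  fix x :: "real vec" assume "x \<in> carrier_vec (dim_col (submatrix L {0..<m} J))"
  then have x: "x \<in> carrier_vec (card J)"
    unfolding svd_column_submatrix[OF L svd J] using B by simp
  have "vnorm (submatrix L {0..<m} J *\<^sub>v x) = vnorm (S *\<^sub>v (?B *\<^sub>v x))"
    unfolding svd_column_submatrix[OF L svd J]
    using vnorm_isometry[OF W WW, of "S *\<^sub>v (?B *\<^sub>v x)"] W S B x
    by (simp add: assoc_mult_mat_vec_dim)
  also have "\<dots> \<le> spec_norm L * vnorm (?B *\<^sub>v x)"
    using svd_sigma_mult_le[OF svd, of "?B *\<^sub>v x"] B x by simp
  also have "\<dots> \<le> spec_norm L * (frob_norm (submatrix V J {0..<r}) * vnorm x)"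
    using vnorm_mult_mat_vec_le_frob_norm[of x ?B] B x spec_norm_nonneg[of L]
    by (simp add: frob_norm_transpose mult_left_mono)
  finally show "vnorm (submatrix L {0..<m} J *\<^sub>v x)
      \<le> frob_norm (submatrix V J {0..<r}) * spec_norm L * vnorm x"
    by (simp add: mult_ac)
qed

lemma frob_norm_row_submatrix_le:
  assumes V: "V \<in> carrier_mat n r" and J: "J \<subseteq> {0..<n}"
    and rows: "\<forall>i<n. vnorm (row V i) \<le> c"
  shows "frob_norm (submatrix V J {0..<r}) \<le> sqrt (real (card J)) * c"
proof (cases "J = {}")
  case True
  then show ?thesis by (simp add: frob_norm_def dim_submatrix)
next
  case False
  then obtain j where "j \<in> J" by blast
  then have "vnorm (row V j) \<le> c" using J rows by auto
  then have c: "0 \<le> c" using vnorm_nonneg[of "row V j"] by linarith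
  have VJ: "submatrix V J {0..<r} \<in> carrier_mat (card J) r"
    using submatrix_carrier_subset[OF V J, of "{0..<r}"] by simp
  have "(\<Sum>a<card J. vnorm (row (submatrix V J {0..<r}) a) ^ 2) \<le> (\<Sum>a<card J. c ^ 2)"
  proof (rule sum_mono)
    fix a assume "a \<in> {..<card J}"
    then have "vnorm (row (submatrix V J {0..<r}) a) \<le> c"
      using row_submatrix_rows[OF V J] rows pick_less[OF J] by simp
    then show "vnorm (row (submatrix V J {0..<r}) a) ^ 2 \<le> c ^ 2"
      by (intro power_mono vnorm_nonneg)
  qed
  then have "frob_norm (submatrix V J {0..<r}) \<le> sqrt (real (card J) * c ^ 2)"
    unfolding frob_norm_def using VJ by simp
  also have "\<dots> = sqrt (real (card J)) * c"
    using c by (simp add: real_sqrt_mult)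
  finally show ?thesis .
qed

lemma vnorm_unit_vec: "i < n \<Longrightarrow> vnorm (unit_vec n i) = 1"
  by (simp add: vnorm_eq_sqrt_scalar_prod)

lemma spec_norm_pinv_svd_ge:
  assumes L: "L \<in> carrier_mat m n" and svd: "compact_svd L r W S V" and r: "0 < r"
  shows "1 / S $$ (r - 1, r - 1) \<le> spec_norm (pinv L)"
proof -
  define s where "s = S $$ (r - 1, r - 1)"
  define e :: "real vec" where "e = unit_vec r (r - 1)"
  have W: "W \<in> carrier_mat m r" and WW: "transpose_mat W * W = 1\<^sub>m r"
    and S: "S \<in> carrier_mat r r" "diagonal_mat S" and V: "V \<in> carrier_mat n r"
    and VV: "transpose_mat V * V = 1\<^sub>m r"
    using svd L unfolding compact_svd_def by auto
  have s: "0 < s" unfolding s_def using svd r unfolding compact_svd_def by simp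
  have e: "e \<in> carrier_vec r" "vnorm e = 1"
    unfolding e_def using r by (auto simp: vnorm_unit_vec)
  have Se: "S *\<^sub>v e = s \<cdot>\<^sub>v e"
    unfolding e_def s_def using r by (intro diagonal_mat_mult_unit_vec[OF S]) simp
  define u where "u = W *\<^sub>v ((1 / s) \<cdot>\<^sub>v e)"
  have u: "u \<in> carrier_vec m" unfolding u_def using W e by simp
  have "S *\<^sub>v ((1 / s) \<cdot>\<^sub>v e) = e"
    using mult_mat_vec[OF S(1) e(1)] Se s by (simp add: smult_smult_assoc)
  then have LTu: "transpose_mat L *\<^sub>v u = V *\<^sub>v e"
    unfolding u_def using svd_mult_vec(2)[OF svd, of "(1 / s) \<cdot>\<^sub>v e"] e by simp
  have "L *\<^sub>v (V *\<^sub>v e) = s \<cdot>\<^sub>v (W *\<^sub>v e)"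
    using svd_mult_vec(1)[OF svd e(1)] Se mult_mat_vec[OF W e(1)] by simp
  then have "vnorm (L *\<^sub>v (transpose_mat L *\<^sub>v u)) = s"
    unfolding LTu using vnorm_isometry[OF W WW e(1)] e s by (simp add: vnorm_smult)
  moreover have "vnorm (transpose_mat L *\<^sub>v u) = 1"
    unfolding LTu using vnorm_isometry[OF V VV e(1)] e by simp
  ultimately have "1 \<le> spec_norm (pinv L) * s"
    using vnorm_le_spec_norm_pinv[OF L u] by simp
  then show ?thesis
    unfolding s_def[symmetric] using s by (simp add: divide_le_eq mult.commute)
qed

lemma spec_norm_pinv_factor_le:
  assumes W: "W \<in> carrier_mat m r" "transpose_mat W * W = 1\<^sub>m r"
    and S: "S \<in> carrier_mat r r" "diagonal_mat S"
    and s: "0 < s" "\<forall>i<r. s \<le> S $$ (i, i)"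
    and B: "B \<in> carrier_mat k r"
  shows "spec_norm (pinv (W * S * transpose_mat B)) \<le> spec_norm (pinv B) / s"
proof (rule spec_norm_least)
  let ?C = "W * S * transpose_mat B"
  have C: "?C \<in> carrier_mat m k" using W S B by simp
  have X: "pinv ?C \<in> carrier_mat k m" by (rule pinv_carrier[OF C])
  show "0 \<le> spec_norm (pinv B) / s" using spec_norm_nonneg s by simp
  fix y :: "real vec" assume "y \<in> carrier_vec (dim_col (pinv ?C))"
  then have y: "y \<in> carrier_vec m" using X by simp
  define z where "z = pinv ?C *\<^sub>v y"
  have z: "z \<in> carrier_vec k" unfolding z_def using X y by simp
  define w where "w = transpose_mat (pinv ?C) *\<^sub>v (pinv ?C *\<^sub>v y)"
  have w: "w \<in> carrier_vec m" unfolding w_def using X y by simp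
  define u where "u = (transpose_mat S * transpose_mat W) *\<^sub>v w"
  have u: "u \<in> carrier_vec r" unfolding u_def using S W w by simp
  have "z = transpose_mat ?C *\<^sub>v w"
    unfolding z_def w_def by (rule pinv_mult_eq_transpose_mult[OF C y])
  also have "transpose_mat ?C = B * (transpose_mat S * transpose_mat W)"
    using W S B by (simp add: transpose_mult_dim assoc_mult_mat_dim)
  finally have z_range: "z = B *\<^sub>v u"
    unfolding u_def using W S B w by (simp add: assoc_mult_mat_vec_dim)
  have "vnorm z \<le> spec_norm (pinv B) * vnorm (transpose_mat B *\<^sub>v z)"
    unfolding z_range by (rule vnorm_le_spec_norm_pinv_range[OF B u])
  moreover have "s * vnorm (transpose_mat B *\<^sub>v z) \<le> vnorm y"
  proof -
    have "s * vnorm (transpose_mat B *\<^sub>v z) \<le> vnorm (S *\<^sub>v (transpose_mat B *\<^sub>v z))"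
      using S s B z by (intro vnorm_diag_mult_ge) auto
    also have "\<dots> = vnorm (?C *\<^sub>v z)"
      using vnorm_isometry[OF W, of "S *\<^sub>v (transpose_mat B *\<^sub>v z)"] W S B z
      by (simp add: assoc_mult_mat_vec_dim)
    also have "\<dots> \<le> vnorm y"
      unfolding z_def by (rule vnorm_mult_pinv_le[OF C y])
    finally show ?thesis .
  qed
  then have "vnorm (transpose_mat B *\<^sub>v z) \<le> vnorm y / s"
    using s by (simp add: pos_le_divide_eq mult.commute)
  ultimately have "vnorm z \<le> spec_norm (pinv B) * (vnorm y / s)"
    using spec_norm_nonneg[of "pinv B"] by (meson mult_left_mono order_trans)
  then show "vnorm (pinv ?C *\<^sub>v y) \<le> spec_norm (pinv B) / s * vnorm y"
    unfolding z_def by simp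
qed

lemma cond_num_column_submatrix_le:
  assumes L: "L \<in> carrier_mat m n" and svd: "compact_svd L r W S V" and J: "J \<subseteq> {0..<n}"
    and r: "0 < r"
  shows "cond_num (submatrix L {0..<m} J) \<le> frob_norm (submatrix V J {0..<r}) * spec_norm L
    * spec_norm (pinv (submatrix V J {0..<r})) * spec_norm (pinv L)"
proof -
  define C where "C = submatrix L {0..<m} J"
  define VJ where "VJ = submatrix V J {0..<r}"
  define s where "s = S $$ (r - 1, r - 1)"
  have W: "W \<in> carrier_mat m r" "transpose_mat W * W = 1\<^sub>m r"
    and S: "S \<in> carrier_mat r r" "diagonal_mat S" and V: "V \<in> carrier_mat n r"
    and s: "0 < s" "\<forall>i<r. s \<le> S $$ (i, i)"
    using svd L r unfolding compact_svd_def s_def by auto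
  have VJ: "VJ \<in> carrier_mat (card J) r"
    unfolding VJ_def using submatrix_carrier_subset[OF V J, of "{0..<r}"] by simp
  have norm_C: "spec_norm C \<le> frob_norm VJ * spec_norm L"
    unfolding C_def VJ_def by (rule spec_norm_column_submatrix_le[OF L svd J])
  have nonneg: "0 \<le> frob_norm VJ * spec_norm L"
    by (simp add: frob_norm_nonneg spec_norm_nonneg)
  have "spec_norm (pinv C) \<le> spec_norm (pinv VJ) / s"
    unfolding C_def svd_column_submatrix[OF L svd J] VJ_def[symmetric]
    by (rule spec_norm_pinv_factor_le[OF W S s VJ])
  then have "cond_num C \<le> frob_norm VJ * spec_norm L * (spec_norm (pinv VJ) / s)"
    unfolding cond_num_def by (rule mult_mono[OF norm_C]) (simp_all add: nonneg spec_norm_nonneg)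
  also have "\<dots> = frob_norm VJ * spec_norm L * spec_norm (pinv VJ) * (1 / s)"
    by simp
  also have "\<dots> \<le> frob_norm VJ * spec_norm L * spec_norm (pinv VJ) * spec_norm (pinv L)"
    using spec_norm_pinv_svd_ge[OF L svd r] nonneg spec_norm_nonneg
    unfolding s_def by (intro mult_left_mono) auto
  finally show ?thesis
    unfolding C_def VJ_def .
qed

theorem lemma4p4:
  fixes L W S V :: "real mat" and m n r :: nat and mu1 mu2 :: real and J :: "nat set"
  assumes L_dim: "L \<in> carrier_mat m n"
    and svd: "compact_svd L r W S V"
    and cohW: "\<forall>i<m. vnorm (row W i) \<le> sqrt (mu1 * real r / real m)"
    and cohV: "\<forall>i<n. vnorm (row V i) \<le> sqrt (mu2 * real r / real n)"
    and J_sub: "J \<subseteq> {0..<n}"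
  defines "C \<equiv> submatrix L {0..<m} J"
  shows "spec_norm C \<le> sqrt (mu2 * real r * real (card J) / real n) * spec_norm L \<and>
         cond_num C \<le> sqrt (mu2 * real r) * cond_num L * sqrt (real (card J) / real n)
                        * spec_norm (pinv (submatrix V J {0..<r}))"
proof -
  define VJ where "VJ = submatrix V J {0..<r}"
  define \<beta> where "\<beta> = sqrt (mu2 * real r * real (card J) / real n)"
  have V: "V \<in> carrier_mat n r"
    using svd L_dim unfolding compact_svd_def by auto
  have frob_VJ: "frob_norm VJ \<le> \<beta>"
    using frob_norm_row_submatrix_le[OF V J_sub cohV]
    unfolding VJ_def \<beta>_def by (simp add: real_sqrt_mult[symmetric] mult_ac)
  then have norm_C: "spec_norm C \<le> \<beta> * spec_norm L"
    using spec_norm_column_submatrix_le[OF L_dim svd J_sub] spec_norm_nonneg[of L]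
    unfolding C_def VJ_def by (meson mult_right_mono order_trans)
  have "cond_num C \<le> \<beta> * spec_norm L * spec_norm (pinv VJ) * spec_norm (pinv L)"
  proof (cases "r = 0")
    case True
    then have "spec_norm C = 0"
      using norm_C spec_norm_nonneg[of C] unfolding \<beta>_def by auto
    then show ?thesis
      using True unfolding cond_num_def \<beta>_def by simp
  next
    case False
    then show ?thesis
      using cond_num_column_submatrix_le[OF L_dim svd J_sub] frob_VJ spec_norm_nonneg
      unfolding C_def VJ_def by (meson mult_right_mono order_trans zero_le_mult_iff not_gr0)
  qed
  moreover have "\<beta> = sqrt (mu2 * real r) * sqrt (real (card J) / real n)"
    unfolding \<beta>_def by (simp add: real_sqrt_mult[symmetric])
  ultimately show ?thesis
    using norm_C unfolding \<beta>_def VJ_def cond_num_def by (simp add: mult_ac)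
qed

end
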